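(* Let $C_n$ be the cycle on $n\ge 3$ vertices. Every ordered multiplicity list that is realized by some matrix in $\mathcal{S}(C_n)$ is realized by some matrix in $\mathcal{S}(C_n)$ that has the SMP.
   Context: For a graph $G$ on vertex set $\{1,\ldots,n\}$, $\mathcal{S}(G)$ is the set of real symmetric $n\times n$ matrices whose $(i,j)$-entry for $i\neq j$ is nonzero if and only if $\{i,j\}$ is an edge (diagonal entries arbitrary). For symmetric $A$ with distinct eigenvalues $\lambda_1<\cdots<\lambda_q$ of multiplicities $m_1,\ldots,m_q$, the ordered multiplicity list is $\mathbf{m}(A)=(m_1,\ldots,m_q)$. $\circ$ is the entrywise product and $[A,X]=AX-XA$. A symmetric matrix $A$ with $q$ distinct eigenvalues has the strong multiplicity property (SMP) if $X=O$ is the only real symmetric matrix with $A\circ X=O$, $I\circ X=O$, $[A,X]=O$ and $\operatorname{tr}(A^kX)=0$ for $k=0,\ldots,q-1$. *)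

theory Defs
  imports "Jordan_Normal_Form.Matrix" "Jordan_Normal_Form.Char_Poly"
begin

text \<open>Vertices of the cycle C_n are labelled 0,...,n-1 (instead of 1,...,n);
  i and j are adjacent iff they are consecutive modulo n.\<close>
definition cycle_edge :: "nat \<Rightarrow> nat \<Rightarrow> nat \<Rightarrow> bool" where
  "cycle_edge n i j \<longleftrightarrow> i < n \<and> j < n \<and> i \<noteq> j \<and> (j = (i + 1) mod n \<or> i = (j + 1) mod n)"

definition S_graph :: "nat \<Rightarrow> (nat \<Rightarrow> nat \<Rightarrow> bool) \<Rightarrow> real mat set" where
  "S_graph n E = {A. A \<in> carrier_mat n n \<and> transpose_mat A = A \<and>
     (\<forall>i<n. \<forall>j<n. i \<noteq> j \<longrightarrow> (A $$ (i,j) \<noteq> 0 \<longleftrightarrow> E i j))}"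

definition distinct_eigenvalues :: "real mat \<Rightarrow> real list" where
  "distinct_eigenvalues A = sorted_list_of_set {x. poly (char_poly A) x = 0}"

definition mult_list :: "real mat \<Rightarrow> nat list" where
  "mult_list A = map (\<lambda>x. order x (char_poly A)) (distinct_eigenvalues A)"

definition SMP :: "real mat \<Rightarrow> bool" where
  "SMP A \<longleftrightarrow> (let n = dim_row A; q = length (distinct_eigenvalues A) in
     \<forall>X \<in> carrier_mat n n.
       transpose_mat X = X \<and>
       (\<forall>i<n. \<forall>j<n. A $$ (i,j) * X $$ (i,j) = 0) \<and>
       (\<forall>i<n. X $$ (i,i) = 0) \<and>
       A * X - X * A = 0\<^sub>m n n \<and>
       (\<forall>k<q. (\<Sum>i<n. (A ^\<^sub>m k * X) $$ (i,i)) = 0)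
       \<longrightarrow> X = 0\<^sub>m n n)"

end

theory Submission
  imports Defs "Jordan_Normal_Form.Schur_Decomposition"
begin

text \<open>
  Every matrix in S(C_n) has the SMP, so one may take B = A.

  Let X satisfy the SMP conditions for A. Since A is real symmetric, the product of (x - \<lambda>)
  over its distinct eigenvalues annihilates A (Cayley-Hamilton, and a nilpotent real symmetric
  matrix is zero), so tr(A^k X) = 0 for all k, not only for k < q. We then show by induction on d
  that X vanishes at all entries whose indices have cyclic distance at most d. For d \<le> 1 this is
  I \<circ> X = O and A \<circ> X = O. For the step, let y_i = X(i, i+d+1) and let P_i be the product of the
  edge weights of A along the path i, i+1, ..., i+d+1. Comparing the (i+1, i+d+1) entries of AX
  and XA shows that P_i y_i is independent of i. Since A^(d+1) reaches distance d+1 only along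
  these paths, every diagonal entry of A^(d+1) X equals 2 P_0 y_0, and tr(A^(d+1) X) = 0 forces
  y = 0.
\<close>

section \<open>Polynomials evaluated at square matrices\<close>

lemma index_mult_mat_sum:
  assumes "A \<in> carrier_mat nr n" "B \<in> carrier_mat n nc" "i < nr" "j < nc"
  shows "(A * B) $$ (i,j) = (\<Sum>l<n. A $$ (i,l) * B $$ (l,j))"
  using assms by (auto simp: scalar_prod_def lessThan_atLeast0 intro!: sum.cong)

lemma index_mult_mult_mat_sum:
  assumes "P \<in> carrier_mat n n" "M \<in> carrier_mat n n" "Q \<in> carrier_mat n n" "a < n" "b < n"
  shows "(P * M * Q) $$ (a,b) = (\<Sum>l<n. \<Sum>m<n. P $$ (a,l) * M $$ (l,m) * Q $$ (m,b))"
proof -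
  have "(P * M * Q) $$ (a,b) = (\<Sum>m<n. (P * M) $$ (a,m) * Q $$ (m,b))"
    using assms by (intro index_mult_mat_sum) auto
  also have "\<dots> = (\<Sum>m<n. \<Sum>l<n. P $$ (a,l) * M $$ (l,m) * Q $$ (m,b))"
    using assms by (simp add: index_mult_mat_sum[of P n n] sum_distrib_right del: index_mult_mat)
  also have "\<dots> = (\<Sum>l<n. \<Sum>m<n. P $$ (a,l) * M $$ (l,m) * Q $$ (m,b))"
    by (rule sum.swap)
  finally show ?thesis .
qed

lemma symmetric_mat_index:
  assumes "A \<in> carrier_mat n n" "transpose_mat A = A" "i < n" "j < n"
  shows "A $$ (j,i) = A $$ (i,j)"
  using assms by (metis carrier_matD index_transpose_mat(1))

lemma pow_mat_commute:
  assumes A: "A \<in> carrier_mat n n"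
  shows "A * A ^\<^sub>m k = A ^\<^sub>m k * A"
proof (induct k)
  case (Suc k)
  have "A * A ^\<^sub>m Suc k = (A * A ^\<^sub>m k) * A"
    using A by (simp add: assoc_mult_mat[of _ n n _ n _ n])
  then show ?case using Suc by simp
qed (use A in simp)

lemma pow_mat_add:
  assumes A: "A \<in> carrier_mat n n"
  shows "A ^\<^sub>m (j + k) = A ^\<^sub>m j * A ^\<^sub>m k"
proof (induct k)
  case (Suc k)
  then show ?case using A by (simp add: assoc_mult_mat[of _ n n _ n _ n])
qed (use A in simp)

lemma transpose_pow_mat:
  fixes A :: "'a :: comm_semiring_1 mat"
  assumes A: "A \<in> carrier_mat n n"
  shows "transpose_mat (A ^\<^sub>m k) = transpose_mat A ^\<^sub>m k"
proof (induct k)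
  case (Suc k)
  have "transpose_mat (A ^\<^sub>m Suc k) = transpose_mat A * transpose_mat A ^\<^sub>m k"
    using A Suc by (simp add: transpose_mult[of "A ^\<^sub>m k" n n A n])
  then show ?case using pow_mat_commute[of "transpose_mat A" n k] A by simp
qed (use A in simp)

text \<open>Evaluated entrywise, as matrices of varying dimension do not form a ring type.\<close>

definition poly_mat :: "'a :: comm_ring_1 mat \<Rightarrow> 'a poly \<Rightarrow> 'a mat" where
  "poly_mat A p = mat (dim_row A) (dim_row A) (\<lambda>(a,b). \<Sum>j\<le>degree p. coeff p j * (A ^\<^sub>m j) $$ (a,b))"

lemma poly_mat_carrier [simp]: "A \<in> carrier_mat n n \<Longrightarrow> poly_mat A p \<in> carrier_mat n n"
  unfolding poly_mat_def by auto

lemma dim_poly_mat [simp]: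
  "dim_row (poly_mat A p) = dim_row A" "dim_col (poly_mat A p) = dim_row A"
  unfolding poly_mat_def by auto

lemma index_poly_mat:
  assumes A: "A \<in> carrier_mat n n" and "degree p \<le> D" "a < n" "b < n"
  shows "poly_mat A p $$ (a,b) = (\<Sum>j\<le>D. coeff p j * (A ^\<^sub>m j) $$ (a,b))"
proof -
  have "(\<Sum>j\<le>D. coeff p j * (A ^\<^sub>m j) $$ (a,b)) = (\<Sum>j\<le>degree p. coeff p j * (A ^\<^sub>m j) $$ (a,b))"
    by (rule sum.mono_neutral_right) (auto simp: coeff_eq_0 assms)
  then show ?thesis using assms unfolding poly_mat_def by simp
qed

lemma poly_mat_add:
  assumes A: "A \<in> carrier_mat n n"
  shows "poly_mat A (p + q) = poly_mat A p + poly_mat A q"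
proof (rule eq_matI)
  fix a b assume "a < dim_row (poly_mat A p + poly_mat A q)" "b < dim_col (poly_mat A p + poly_mat A q)"
  with A have ab: "a < n" "b < n" by auto
  let ?D = "max (degree p) (degree q)"
  have D: "degree (p + q) \<le> ?D" "degree p \<le> ?D" "degree q \<le> ?D"
    by (auto simp: degree_add_le_max)
  show "poly_mat A (p + q) $$ (a,b) = (poly_mat A p + poly_mat A q) $$ (a,b)"
    using A ab by (simp add: index_poly_mat[OF A D(1) ab] index_poly_mat[OF A D(2) ab]
        index_poly_mat[OF A D(3) ab] sum.distrib ring_distribs)
qed (use A in auto)

lemma poly_mat_smult:
  assumes A: "A \<in> carrier_mat n n"
  shows "poly_mat A (Polynomial.smult c p) = c \<cdot>\<^sub>m poly_mat A p"
proof (rule eq_matI)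
  fix a b assume "a < dim_row (c \<cdot>\<^sub>m poly_mat A p)" "b < dim_col (c \<cdot>\<^sub>m poly_mat A p)"
  with A have ab: "a < n" "b < n" by auto
  have D: "degree (Polynomial.smult c p) \<le> degree p" by (rule degree_smult_le)
  show "poly_mat A (Polynomial.smult c p) $$ (a,b) = (c \<cdot>\<^sub>m poly_mat A p) $$ (a,b)"
    using A ab by (simp add: index_poly_mat[OF A D ab] index_poly_mat[where p = p, OF A order.refl ab]
        sum_distrib_left mult.assoc)
qed (use A in auto)

lemma poly_mat_const:
  assumes "A \<in> carrier_mat n n"
  shows "poly_mat A [:c:] = c \<cdot>\<^sub>m 1\<^sub>m n"
  using assms by (intro eq_matI) (auto simp: poly_mat_def)

lemma poly_mat_0: "A \<in> carrier_mat n n \<Longrightarrow> poly_mat A 0 = 0\<^sub>m n n"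
  by (intro eq_matI) (auto simp: poly_mat_def)

lemma poly_mat_1: "A \<in> carrier_mat n n \<Longrightarrow> poly_mat A 1 = 1\<^sub>m n"
  by (intro eq_matI) (auto simp: poly_mat_def)

lemma poly_mat_pCons_0:
  assumes A: "A \<in> carrier_mat n n"
  shows "poly_mat A (pCons 0 p) = A * poly_mat A p"
proof (rule eq_matI)
  fix a b assume "a < dim_row (A * poly_mat A p)" "b < dim_col (A * poly_mat A p)"
  with A have ab: "a < n" "b < n" by auto
  have "poly_mat A (pCons 0 p) $$ (a,b)
      = (\<Sum>j\<le>Suc (degree p). coeff (pCons 0 p) j * (A ^\<^sub>m j) $$ (a,b))"
    by (rule index_poly_mat[OF A degree_pCons_le ab])
  also have "\<dots> = (\<Sum>j\<le>degree p. coeff p j * (A * A ^\<^sub>m j) $$ (a,b))"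
    by (subst sum.atMost_Suc_shift) (simp add: pow_mat_commute[OF A])
  also have "\<dots> = (\<Sum>j\<le>degree p. \<Sum>l<n. A $$ (a,l) * (coeff p j * (A ^\<^sub>m j) $$ (l,b)))"
    by (simp add: index_mult_mat_sum[OF A pow_carrier_mat[OF A] ab] sum_distrib_left mult.left_commute)
  also have "\<dots> = (\<Sum>l<n. \<Sum>j\<le>degree p. A $$ (a,l) * (coeff p j * (A ^\<^sub>m j) $$ (l,b)))"
    by (rule sum.swap)
  also have "\<dots> = (A * poly_mat A p) $$ (a,b)"
    unfolding index_mult_mat_sum[OF A poly_mat_carrier[OF A] ab]
    by (intro sum.cong refl) (simp add: ab index_poly_mat[OF A order.refl] sum_distrib_left)
  finally show "poly_mat A (pCons 0 p) $$ (a,b) = (A * poly_mat A p) $$ (a,b)" .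
qed (use A in auto)

lemma poly_mat_pCons:
  assumes A: "A \<in> carrier_mat n n"
  shows "poly_mat A (pCons c p) = c \<cdot>\<^sub>m 1\<^sub>m n + A * poly_mat A p"
proof -
  have "pCons c p = [:c:] + pCons 0 p" by simp
  then show ?thesis using poly_mat_add[OF A] poly_mat_const[OF A] poly_mat_pCons_0[OF A] by metis
qed

lemma poly_mat_mult:
  assumes A: "A \<in> carrier_mat n n"
  shows "poly_mat A (p * q) = poly_mat A p * poly_mat A q"
proof (induct p rule: pCons_induct)
  case 0
  then show ?case using A by (simp add: poly_mat_0)
next
  case (pCons c p)
  have Pq: "poly_mat A q \<in> carrier_mat n n" and Pp: "poly_mat A p \<in> carrier_mat n n"
    using A by auto
  have "poly_mat A (pCons c p * q) = poly_mat A (Polynomial.smult c q + pCons 0 (p * q))" by simp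
  also have "\<dots> = c \<cdot>\<^sub>m poly_mat A q + A * (poly_mat A p * poly_mat A q)"
    by (simp add: poly_mat_add[OF A] poly_mat_smult[OF A] poly_mat_pCons_0[OF A] pCons(2))
  also have "\<dots> = (c \<cdot>\<^sub>m 1\<^sub>m n) * poly_mat A q + (A * poly_mat A p) * poly_mat A q"
    using A Pp Pq by (simp add: assoc_mult_mat[of _ n n _ n _ n] mult_smult_assoc_mat[of _ n n _ n])
  also have "\<dots> = (c \<cdot>\<^sub>m 1\<^sub>m n + A * poly_mat A p) * poly_mat A q"
    using A Pp Pq by (intro add_mult_distrib_mat[symmetric, of _ n n]) auto
  finally show ?case by (simp add: poly_mat_pCons[OF A])
qed

lemma poly_mat_power:
  assumes A: "A \<in> carrier_mat n n"
  shows "poly_mat A (p ^ k) = poly_mat A p ^\<^sub>m k"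
proof (induct k)
  case (Suc k)
  then show ?case
    using pow_mat_commute[OF poly_mat_carrier[OF A]] by (simp add: poly_mat_mult[OF A])
qed (use A in \<open>simp add: poly_mat_1\<close>)

lemma poly_mat_linear:
  assumes A: "A \<in> carrier_mat n n"
  shows "poly_mat A [:-c, 1:] = A - c \<cdot>\<^sub>m 1\<^sub>m n"
  using A by (intro eq_matI) (auto simp: poly_mat_def)

lemma transpose_poly_mat:
  assumes A: "A \<in> carrier_mat n n"
  shows "transpose_mat (poly_mat A p) = poly_mat (transpose_mat A) p"
  using A by (intro eq_matI) (auto simp: poly_mat_def transpose_pow_mat[OF A, symmetric])

lemma poly_mat_similar:
  assumes sim: "similar_mat_wit A B P Q"
  shows "poly_mat A p = P * poly_mat B p * Q"
proof -
  define n where "n = dim_row A"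
  note W = similar_mat_witD[OF n_def sim]
  show ?thesis
  proof (rule eq_matI)
    fix a b assume "a < dim_row (P * poly_mat B p * Q)" "b < dim_col (P * poly_mat B p * Q)"
    with W have ab: "a < n" "b < n" by auto
    have "poly_mat A p $$ (a,b)
        = (\<Sum>j\<le>degree p. \<Sum>l<n. \<Sum>m<n. coeff p j * (P $$ (a,l) * (B ^\<^sub>m j) $$ (l,m) * Q $$ (m,b)))"
      using W(4-7) ab by (simp add: index_poly_mat[OF W(4) order.refl ab] similar_mat_wit_pow_id[OF sim]
          index_mult_mult_mat_sum[of _ n] sum_distrib_left del: index_mult_mat)
    also have "\<dots> = (\<Sum>l<n. \<Sum>m<n. \<Sum>j\<le>degree p. coeff p j * (P $$ (a,l) * (B ^\<^sub>m j) $$ (l,m) * Q $$ (m,b)))"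
      by (subst sum.swap, rule sum.cong[OF refl], rule sum.swap)
    also have "\<dots> = (P * poly_mat B p * Q) $$ (a,b)"
      using W(4-7) ab by (simp add: index_mult_mult_mat_sum[of _ n] index_poly_mat[OF W(5) order.refl]
          sum_distrib_left sum_distrib_right mult_ac del: index_mult_mat)
    finally show "poly_mat A p $$ (a,b) = (P * poly_mat B p * Q) $$ (a,b)" .
  qed (use W in auto)
qed

lemma poly_mat_prod_diag_upper_triangular:
  fixes B :: "'a :: comm_ring_1 mat"
  assumes B: "B \<in> carrier_mat n n" and ut: "upper_triangular B"
  shows "k \<le> n \<Longrightarrow> i < n \<Longrightarrow> j < k \<Longrightarrow> poly_mat B (\<Prod>t<k. [:- B $$ (t,t), 1:]) $$ (i,j) = 0"
proof (induct k arbitrary: i j)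
  case (Suc k)
  let ?M = "poly_mat B (\<Prod>t<k. [:- B $$ (t,t), 1:])"
  let ?L = "B - B $$ (k,k) \<cdot>\<^sub>m 1\<^sub>m n"
  have j: "j < n" using Suc by auto
  have "poly_mat B (\<Prod>t<Suc k. [:- B $$ (t,t), 1:]) $$ (i,j) = (?M * ?L) $$ (i,j)"
    unfolding prod.lessThan_Suc poly_mat_mult[OF B] poly_mat_linear[OF B] ..
  also have "\<dots> = (\<Sum>l<n. ?M $$ (i,l) * ?L $$ (l,j))"
    using B Suc j by (intro index_mult_mat_sum[of _ n n _ n]) auto
  also have "\<dots> = 0"
  proof (intro sum.neutral ballI)
    fix l assume l: "l \<in> {..<n}"
    consider "l < k" | "j < l" | "l = k" "j = k" using Suc by linarith
    then show "?M $$ (i,l) * ?L $$ (l,j) = 0"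
    proof cases
      case 2
      then have "B $$ (l,j) = 0" using ut l B unfolding upper_triangular_def by auto
      then show ?thesis using 2 l j B by simp
    qed (use Suc l j B in auto)
  qed
  finally show ?case .
qed simp

theorem cayley_hamilton_upper_triangular:
  fixes B :: "'a :: comm_ring_1 mat"
  assumes B: "B \<in> carrier_mat n n" and ut: "upper_triangular B"
  shows "poly_mat B (char_poly B) = 0\<^sub>m n n"
proof -
  have "char_poly B = (\<Prod>t<n. [:- B $$ (t,t), 1:])"
    using B by (simp add: char_poly_upper_triangular[OF B ut] diag_mat_def
        prod.distinct_set_conv_list[symmetric] atLeast0LessThan comp_def)
  then show ?thesis
    using poly_mat_prod_diag_upper_triangular[OF B ut order.refl] B by (intro eq_matI) auto
qed

theorem cayley_hamilton_split:
  fixes A :: "'a :: conjugatable_ordered_field mat"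
  assumes A: "A \<in> carrier_mat n n" and split: "char_poly A = (\<Prod>a\<leftarrow>es. [:- a, 1:])"
  shows "poly_mat A (char_poly A) = 0\<^sub>m n n"
proof -
  obtain B where B: "B \<in> carrier_mat n n" "upper_triangular B" and "similar_mat A B"
    using schur_decomposition_exists[OF A split] by blast
  then obtain P Q where sim: "similar_mat_wit A B P Q" unfolding similar_mat_def by blast
  have "char_poly A = char_poly B" by (rule char_poly_similar[OF \<open>similar_mat A B\<close>])
  then have "poly_mat A (char_poly A) = P * 0\<^sub>m n n * Q"
    by (simp add: poly_mat_similar[OF sim] cayley_hamilton_upper_triangular[OF B])
  moreover have "P \<in> carrier_mat n n" "Q \<in> carrier_mat n n"
    using similar_mat_witD2[OF A sim] by auto
  ultimately show ?thesis by simp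
qed

section \<open>Real symmetric matrices\<close>

interpretation of_real_poly_hom: map_poly_inj_idom_hom "of_real :: real \<Rightarrow> complex" ..

lemma real_symmetric_eigenvalue_real:
  fixes A :: "real mat"
  assumes A: "A \<in> carrier_mat n n" and sym: "transpose_mat A = A"
    and ev: "eigenvalue (of_real_hom.mat_hom A) a"
  shows "cnj a = a"
proof -
  from ev obtain v where v: "v \<in> carrier_vec n" "v \<noteq> 0\<^sub>v n" "of_real_hom.mat_hom A *\<^sub>v v = a \<cdot>\<^sub>v v"
    unfolding eigenvalue_def eigenvector_def using A by auto
  have Av: "(\<Sum>j<n. of_real (A $$ (i,j)) * v $ j) = a * v $ i" if i: "i < n" for i
  proof -
    have "(of_real_hom.mat_hom A *\<^sub>v v) $ i = (\<Sum>j<n. of_real (A $$ (i,j)) * v $ j)"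
      using A v(1) i by (auto simp: scalar_prod_def lessThan_atLeast0 intro!: sum.cong)
    then show ?thesis using v i by simp
  qed
  define S where "S = (\<Sum>i<n. cnj (v $ i) * v $ i)"
  define T where "T = (\<Sum>i<n. cnj (v $ i) * (\<Sum>j<n. of_real (A $$ (i,j)) * v $ j))"
  have "T = (\<Sum>i<n. cnj (v $ i) * (a * v $ i))" unfolding T_def using Av by auto
  then have "T = a * S" unfolding S_def by (simp add: sum_distrib_left mult_ac)
  moreover have "cnj T = T"
  proof -
    have "cnj T = (\<Sum>i<n. \<Sum>j<n. v $ i * of_real (A $$ (i,j)) * cnj (v $ j))"
      unfolding T_def by (simp add: sum_distrib_left mult_ac)
    also have "\<dots> = (\<Sum>j<n. \<Sum>i<n. v $ i * of_real (A $$ (i,j)) * cnj (v $ j))"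
      by (rule sum.swap)
    also have "\<dots> = T"
      unfolding T_def using symmetric_mat_index[OF A sym]
      by (auto simp: sum_distrib_left mult_ac intro!: sum.cong)
    finally show ?thesis .
  qed
  moreover have "S = of_real (\<Sum>i<n. (cmod (v $ i))\<^sup>2)"
    unfolding S_def of_real_sum
    by (intro sum.cong) (simp_all add: complex_norm_square mult.commute del: of_real_power)
  moreover have "(\<Sum>i<n. (cmod (v $ i))\<^sup>2) \<noteq> 0"
  proof
    assume "(\<Sum>i<n. (cmod (v $ i))\<^sup>2) = 0"
    then have "\<forall>i\<in>{..<n}. (cmod (v $ i))\<^sup>2 = 0" by (subst sum_nonneg_eq_0_iff[symmetric]) auto
    then have "v = 0\<^sub>v n" using v(1) by (intro eq_vecI) auto
    then show False using v(2) by simp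
  qed
  ultimately show ?thesis by (metis complex_cnj_mult complex_cnj_complex_of_real mult_cancel_right of_real_eq_0_iff)
qed

lemma char_poly_real_symmetric_split:
  fixes A :: "real mat"
  assumes A: "A \<in> carrier_mat n n" and sym: "transpose_mat A = A"
  obtains es where "char_poly A = (\<Prod>a\<leftarrow>es. [:- a, 1:])"
proof -
  let ?C = "of_real_hom.mat_hom A :: complex mat"
  have C: "?C \<in> carrier_mat n n" using A by auto
  obtain as where split: "char_poly ?C = (\<Prod>a\<leftarrow>as. [:- a, 1:])"
    using char_poly_factorized[OF C] by blast
  have real: "of_real (Re a) = a" if "a \<in> set as" for a
  proof -
    have "poly (char_poly ?C) a = 0" unfolding split using that by (rule linear_poly_root)
    then have "cnj a = a"
      using real_symmetric_eigenvalue_real[OF A sym] eigenvalue_root_char_poly[OF C] by simp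
    then show ?thesis by (simp add: complex_eq_iff)
  qed
  have "map_poly of_real (\<Prod>a\<leftarrow>map Re as. [:- a, 1:]) = (\<Prod>a\<leftarrow>as. [:- a, 1:] :: complex poly)"
    using real
  proof (induct as)
    case (Cons b bs)
    then show ?case by (simp only: list.map prod_list.Cons o_def of_real_poly_hom.hom_mult) simp
  qed simp
  also have "\<dots> = map_poly of_real (char_poly A)"
    unfolding split[symmetric] of_real_hom.char_poly_hom[OF A] ..
  finally have "char_poly A = (\<Prod>a\<leftarrow>map Re as. [:- a, 1:])" by simp
  then show ?thesis by (rule that)
qed

lemma real_symmetric_square_eq_0:
  fixes M :: "real mat"
  assumes M: "M \<in> carrier_mat n n" and sym: "transpose_mat M = M" and sq: "M * M = 0\<^sub>m n n"
  shows "M = 0\<^sub>m n n"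
proof (rule eq_matI)
  fix i l assume "i < dim_row (0\<^sub>m n n)" "l < dim_col (0\<^sub>m n n)"
  then have il: "i < n" "l < n" by auto
  have "(\<Sum>t<n. (M $$ (i,t))\<^sup>2) = (M * M) $$ (i,i)"
    using index_mult_mat_sum[OF M M il(1) il(1)] symmetric_mat_index[OF M sym il(1)]
    by (auto simp: power2_eq_square intro!: sum.cong)
  also have "\<dots> = 0" using sq il by simp
  finally have "\<forall>t\<in>{..<n}. (M $$ (i,t))\<^sup>2 = 0" by (subst sum_nonneg_eq_0_iff[symmetric]) auto
  then show "M $$ (i,l) = 0\<^sub>m n n $$ (i,l)" using il by auto
qed (use M in auto)

lemma real_symmetric_nilpotent_eq_0:
  fixes M :: "real mat"
  assumes M: "M \<in> carrier_mat n n" and sym: "transpose_mat M = M"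
  shows "M ^\<^sub>m Suc k = 0\<^sub>m n n \<Longrightarrow> M = 0\<^sub>m n n"
proof (induct k)
  case (Suc k)
  have "M ^\<^sub>m Suc k * M ^\<^sub>m Suc k = M ^\<^sub>m (Suc (Suc k) + k)"
    unfolding pow_mat_add[OF M, symmetric] by simp
  also have "\<dots> = M ^\<^sub>m Suc (Suc k) * M ^\<^sub>m k" by (rule pow_mat_add[OF M])
  also have "\<dots> = 0\<^sub>m n n" using Suc(2) M by simp
  finally have "M ^\<^sub>m Suc k = 0\<^sub>m n n"
    using real_symmetric_square_eq_0 pow_carrier_mat[OF M] transpose_pow_mat[OF M] sym by metis
  then show ?case by (rule Suc(1))
qed (use M in simp)

lemma prod_linear_factors_dvd_power:
  fixes bs ds :: "'a :: comm_ring_1 list"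
  assumes "set bs \<subseteq> set ds"
  shows "(\<Prod>a\<leftarrow>bs. [:- a, 1:]) dvd (\<Prod>a\<leftarrow>ds. [:- a, 1:]) ^ length bs"
  using assms
proof (induct bs)
  case (Cons b bs)
  have "[:- b, 1:] dvd (\<Prod>a\<leftarrow>ds. [:- a, 1:])"
    using Cons(2) by (intro prod_list_dvd) auto
  moreover have "(\<Prod>a\<leftarrow>bs. [:- a, 1:]) dvd (\<Prod>a\<leftarrow>ds. [:- a, 1:]) ^ length bs"
    using Cons by simp
  ultimately show ?case
    unfolding list.map prod_list.Cons length_Cons power_Suc by (rule mult_dvd_mono)
qed simp

theorem poly_mat_distinct_eigenvalues_eq_0:
  fixes A :: "real mat"
  assumes A: "A \<in> carrier_mat n n" and sym: "transpose_mat A = A"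
  shows "poly_mat A (\<Prod>a\<leftarrow>distinct_eigenvalues A. [:- a, 1:]) = 0\<^sub>m n n"
proof -
  obtain es where split: "char_poly A = (\<Prod>a\<leftarrow>es. [:- a, 1:])"
    using char_poly_real_symmetric_split[OF A sym] .
  define p where "p = (\<Prod>a\<leftarrow>distinct_eigenvalues A. [:- a, 1:])"
  have "{x. poly (char_poly A) x = 0} = set es"
    unfolding split by (auto simp: poly_prod_list_zero_iff)
  then have "set (distinct_eigenvalues A) = set es"
    unfolding distinct_eigenvalues_def by simp
  then have "char_poly A dvd p ^ length es"
    unfolding split p_def by (intro prod_linear_factors_dvd_power) simp
  then obtain g where "p ^ length es = char_poly A * g" by (elim dvdE)
  then have g: "p ^ Suc (length es) = char_poly A * (g * p)" by (simp add: mult_ac)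
  have "poly_mat A p ^\<^sub>m Suc (length es) = poly_mat A (char_poly A) * poly_mat A (g * p)"
    unfolding poly_mat_power[OF A, symmetric] g by (rule poly_mat_mult[OF A])
  also have "\<dots> = 0\<^sub>m n n"
    using A by (simp add: cayley_hamilton_split[OF A split])
  finally show ?thesis unfolding p_def[symmetric]
    using real_symmetric_nilpotent_eq_0[OF poly_mat_carrier[OF A]] transpose_poly_mat[OF A] sym
    by metis
qed

lemma trace_poly_mat_mult:
  assumes A: "A \<in> carrier_mat n n" and X: "X \<in> carrier_mat n n"
  shows "(\<Sum>i<n. (poly_mat A p * X) $$ (i,i))
    = (\<Sum>j\<le>degree p. coeff p j * (\<Sum>i<n. (A ^\<^sub>m j * X) $$ (i,i)))"
proof -
  have "(\<Sum>i<n. (poly_mat A p * X) $$ (i,i))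
      = (\<Sum>i<n. \<Sum>l<n. \<Sum>j\<le>degree p. coeff p j * (A ^\<^sub>m j) $$ (i,l) * X $$ (l,i))"
    using A X by (simp add: index_mult_mat_sum[of _ n n _ n] index_poly_mat[OF A order.refl]
        sum_distrib_right del: index_mult_mat)
  also have "\<dots> = (\<Sum>j\<le>degree p. \<Sum>i<n. \<Sum>l<n. coeff p j * (A ^\<^sub>m j) $$ (i,l) * X $$ (l,i))"
    by (subst sum.swap, rule sum.cong[OF refl], rule sum.swap)
  also have "\<dots> = (\<Sum>j\<le>degree p. coeff p j * (\<Sum>i<n. (A ^\<^sub>m j * X) $$ (i,i)))"
    using A X by (simp add: index_mult_mat_sum[of _ n n _ n] sum_distrib_left mult.assoc
        del: index_mult_mat)
  finally show ?thesis .
qed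

lemma trace_pow_mult_eq_0_of_annihilating_poly:
  fixes A X :: "'a :: field mat"
  assumes A: "A \<in> carrier_mat n n" and X: "X \<in> carrier_mat n n"
    and ann: "poly_mat A p = 0\<^sub>m n n" and monic: "monic p"
    and low: "\<forall>k < degree p. (\<Sum>i<n. (A ^\<^sub>m k * X) $$ (i,i)) = 0"
  shows "(\<Sum>i<n. (A ^\<^sub>m k * X) $$ (i,i)) = 0"
proof (induct k rule: less_induct)
  case (less k)
  define tr where "tr j = (\<Sum>i<n. (A ^\<^sub>m j * X) $$ (i,i))" for j
  show ?case
  proof (cases "k < degree p")
    case False
    define r where "r = monom 1 (k - degree p) * p"
    have "p \<noteq> 0" using monic by auto
    then have deg: "degree r = k" and lead: "coeff r k = 1"
      using False monic by (auto simp: r_def degree_mult_eq degree_monom_eq coeff_monom_mult)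
    have "poly_mat A r = 0\<^sub>m n n"
      using A by (simp add: r_def poly_mat_mult[OF A] ann)
    then have "0 = (\<Sum>j\<le>k. coeff r j * tr j)"
      using trace_poly_mat_mult[OF A X, of r] X by (simp add: deg tr_def)
    also have "\<dots> = tr k"
      using less lead by (simp add: lessThan_Suc_atMost[symmetric] tr_def)
    finally show ?thesis by (simp add: tr_def)
  qed (use low in simp)
qed

theorem real_symmetric_trace_pow_mult_eq_0:
  fixes A X :: "real mat"
  assumes A: "A \<in> carrier_mat n n" and sym: "transpose_mat A = A" and X: "X \<in> carrier_mat n n"
    and low: "\<forall>k < length (distinct_eigenvalues A). (\<Sum>i<n. (A ^\<^sub>m k * X) $$ (i,i)) = 0"
  shows "(\<Sum>i<n. (A ^\<^sub>m k * X) $$ (i,i)) = 0"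
proof (rule trace_pow_mult_eq_0_of_annihilating_poly[OF A X poly_mat_distinct_eigenvalues_eq_0[OF A sym]])
  show "monic (\<Prod>a\<leftarrow>distinct_eigenvalues A. [:- a, 1:])" by (rule monic_prod_list) auto
qed (use low in \<open>simp add: degree_linear_factors\<close>)

section \<open>Distance on the cycle\<close>

lemma sum_eq_single_term:
  assumes "finite S" "a \<in> S" "\<And>x. x \<in> S \<Longrightarrow> x \<noteq> a \<Longrightarrow> f x = 0"
  shows "sum f S = f a"
  using assms by (subst sum.remove[of S a]) (auto intro: sum.neutral)

lemma sum_eq_two_terms:
  assumes "finite S" "a \<in> S" "b \<in> S" "a \<noteq> b" "\<And>x. x \<in> S \<Longrightarrow> x \<noteq> a \<Longrightarrow> x \<noteq> b \<Longrightarrow> f x = 0"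
  shows "sum f S = f a + f b"
proof -
  have "sum f S = f a + sum f (S - {a})" using assms by (intro sum.remove) auto
  also have "sum f (S - {a}) = f b" using assms by (intro sum_eq_single_term) auto
  finally show ?thesis .
qed

definition cycle_shift :: "nat \<Rightarrow> nat \<Rightarrow> nat \<Rightarrow> nat" where
  "cycle_shift n i t = (i + t) mod n"

lemma cycle_shift_eq:
  assumes "i < n" "t \<le> n"
  shows "cycle_shift n i t = (if i + t < n then i + t else i + t - n)"
  using assms by (auto simp: cycle_shift_def le_mod_geq)

lemma cycle_shift_0: "i < n \<Longrightarrow> cycle_shift n i 0 = i"
  unfolding cycle_shift_def by simp

lemma cycle_shift_1: "l < n \<Longrightarrow> cycle_shift n l 1 = (if Suc l < n then Suc l else 0)"
  by (simp add: cycle_shift_eq)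

lemma cycle_shift_less: "0 < n \<Longrightarrow> cycle_shift n i t < n"
  unfolding cycle_shift_def by simp

lemma cycle_shift_shift: "cycle_shift n (cycle_shift n i a) b = cycle_shift n i (a + b)"
  unfolding cycle_shift_def by (simp add: mod_add_left_eq add.assoc)

lemma cycle_shift_self: "i < n \<Longrightarrow> cycle_shift n i n = i"
  unfolding cycle_shift_def by simp

lemma cycle_shift_inj:
  assumes "i < n" "a < n" "b < n" "cycle_shift n i a = cycle_shift n i b"
  shows "a = b"
  using assms cycle_shift_eq[OF assms(1) less_imp_le[OF assms(2)]]
    cycle_shift_eq[OF assms(1) less_imp_le[OF assms(3)]] by (auto split: if_splits)

lemma ex_cycle_shift_eq:
  assumes "i < n" "j < n"
  obtains t where "t < n" "j = cycle_shift n i t"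
proof (cases "i \<le> j")
  case True
  then show ?thesis using assms by (intro that[of "j - i"]) (auto simp: cycle_shift_eq)
next
  case False
  then show ?thesis using assms by (intro that[of "j + n - i"]) (auto simp: cycle_shift_eq)
qed

lemma bij_betw_cycle_shift:
  assumes i: "i < n"
  shows "bij_betw (cycle_shift n i) {..<n} {..<n}"
proof (rule bij_betw_imageI)
  show "inj_on (cycle_shift n i) {..<n}"
    using cycle_shift_inj[OF i] by (auto intro: inj_onI)
  show "cycle_shift n i ` {..<n} = {..<n}"
  proof
    show "cycle_shift n i ` {..<n} \<subseteq> {..<n}" using i by (auto simp: cycle_shift_less)
    show "{..<n} \<subseteq> cycle_shift n i ` {..<n}"
    proof
      fix j assume "j \<in> {..<n}"
      then obtain t where "t < n" "j = cycle_shift n i t" using ex_cycle_shift_eq[OF i] by auto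
      then show "j \<in> cycle_shift n i ` {..<n}" by auto
    qed
  qed
qed

lemma sum_cycle_shift: "i < n \<Longrightarrow> (\<Sum>l<n. f l) = (\<Sum>t<n. f (cycle_shift n i t))"
  using sum.reindex_bij_betw[OF bij_betw_cycle_shift] by metis

definition cycle_dist :: "nat \<Rightarrow> nat \<Rightarrow> nat \<Rightarrow> nat" where
  "cycle_dist n i j = nat (min ((int j - int i) mod int n) ((int i - int j) mod int n))"

lemma cycle_dist_shift_shift:
  "cycle_dist n (cycle_shift n i a) (cycle_shift n i b) = cycle_dist n a b"
proof -
  have "(int ((i + y) mod n) - int ((i + x) mod n)) mod int n = (int y - int x) mod int n" for x y
  proof -
    have "(int ((i + y) mod n) - int ((i + x) mod n)) mod int n = (int (i + y) - int (i + x)) mod int n"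
      unfolding of_nat_mod by (rule mod_diff_eq)
    then show ?thesis by simp
  qed
  then show ?thesis unfolding cycle_dist_def cycle_shift_def by presburger
qed

lemma cycle_dist_commute: "cycle_dist n i j = cycle_dist n j i"
  unfolding cycle_dist_def by (simp add: min.commute)

lemma cycle_dist_eq:
  assumes "a < n" "b < n"
  shows "cycle_dist n a b = (let d = (if a \<le> b then b - a else a - b) in min d (n - d))"
proof -
  have pos: "(int y - int x) mod int n = int (y - x)" if "x \<le> y" "y < n" for x y
    using that by (simp add: of_nat_diff mod_pos_pos_trivial)
  have neg: "(int x - int y) mod int n = int (n - (y - x))" if "x < y" "y < n" for x y
  proof -
    have "(int x - int y) mod int n = (int x - int y + int n) mod int n" by simp
    also have "\<dots> = int x - int y + int n" using that by (intro mod_pos_pos_trivial) auto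
    finally show ?thesis using that by (simp add: of_nat_diff)
  qed
  have nat_min: "nat (min (int x) (int y)) = min x y" for x y by simp
  consider "a = b" | "a < b" | "b < a" by linarith
  then show ?thesis
  proof cases
    case 2
    then show ?thesis using assms unfolding cycle_dist_def Let_def
      by (simp only: pos neg nat_min less_imp_le if_True)
  next
    case 3
    then show ?thesis using assms unfolding cycle_dist_def Let_def
      by (simp only: pos neg nat_min less_imp_le) (simp add: min.commute)
  qed (simp add: cycle_dist_def)
qed

lemma cycle_dist_self [simp]: "cycle_dist n i i = 0"
  unfolding cycle_dist_def by simp

lemma cycle_dist_shift:
  assumes "i < n" "t < n"
  shows "cycle_dist n i (cycle_shift n i t) = min t (n - t)"
proof -
  have "cycle_dist n i (cycle_shift n i t) = cycle_dist n 0 t"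
    using cycle_dist_shift_shift[of n i 0 t] by (simp add: cycle_shift_0 assms(1))
  then show ?thesis using assms by (simp add: cycle_dist_eq)
qed

lemma cycle_dist_le_half: "cycle_dist n i j \<le> n div 2"
proof -
  let ?x = "(int j - int i) mod int n" and ?y = "(int i - int j) mod int n"
  have "?y = (if ?x = 0 then 0 else int n - ?x)"
    using zmod_zminus1_eq_if[of "int j - int i" "int n"] by simp
  then have "?x + ?y \<le> int n" by auto
  then show ?thesis unfolding cycle_dist_def by linarith
qed

lemma cycle_dist_eq_0_iff: "i < n \<Longrightarrow> j < n \<Longrightarrow> cycle_dist n i j = 0 \<longleftrightarrow> i = j"
  by (auto simp: cycle_dist_eq Let_def split: if_splits)

lemma cycle_dist_shift_1_le:
  assumes "i < n" "l < n"
  shows "cycle_dist n i (cycle_shift n l 1) \<le> Suc (cycle_dist n i l)"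
  unfolding cycle_shift_1[OF assms(2)] using assms
  by (cases "Suc l < n") (auto simp: cycle_dist_eq Let_def)

lemma cycle_dist_le_shift_1:
  assumes "i < n" "l < n"
  shows "cycle_dist n i l \<le> Suc (cycle_dist n i (cycle_shift n l 1))"
  unfolding cycle_shift_1[OF assms(2)] using assms
  by (cases "Suc l < n") (auto simp: cycle_dist_eq Let_def)

lemma offset_near_path_end:
  assumes "t < n" "2 * Suc k \<le> n" "min t (n - t) \<le> k" "cycle_dist n t (Suc k) \<le> 1"
  shows "t = k \<or> (2 * Suc k = n \<and> t = Suc (Suc k))"
  using assms by (auto simp: cycle_dist_eq Let_def split: if_splits)

lemma cycle_dist_to_Suc_of_neighbour_of_1:
  assumes "t < n" "t \<noteq> 0" "2 * Suc d \<le> n" "1 \<le> d" "cycle_dist n 1 t \<le> 1"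
  shows "cycle_dist n t (Suc d) \<le> d"
  using assms by (auto simp: cycle_dist_eq Let_def split: if_splits)

lemma cycle_dist_to_1_of_neighbour_of_Suc:
  assumes "t < n" "t \<noteq> Suc (Suc d)" "2 * Suc d \<le> n" "1 \<le> d" "cycle_dist n t (Suc d) \<le> 1"
  shows "cycle_dist n 1 t \<le> d"
  using assms by (auto simp: cycle_dist_eq Let_def split: if_splits)

section \<open>Matrices of the cycle and the SMP\<close>

locale cycle_matrix =
  fixes n :: nat and A :: "real mat"
  assumes three_le_n: "3 \<le> n" and A_in_S: "A \<in> S_graph n (cycle_edge n)"
begin

abbreviation shift :: "nat \<Rightarrow> nat \<Rightarrow> nat" where "shift \<equiv> cycle_shift n"
abbreviation cdist :: "nat \<Rightarrow> nat \<Rightarrow> nat" where "cdist \<equiv> cycle_dist n"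

lemma A_carrier: "A \<in> carrier_mat n n"
  using A_in_S unfolding S_graph_def by auto

lemma A_symmetric: "transpose_mat A = A"
  using A_in_S unfolding S_graph_def by auto

lemma A_index_sym: "i < n \<Longrightarrow> j < n \<Longrightarrow> A $$ (j,i) = A $$ (i,j)"
  by (rule symmetric_mat_index[OF A_carrier A_symmetric])

lemma pow_index_sym: "i < n \<Longrightarrow> j < n \<Longrightarrow> (A ^\<^sub>m k) $$ (j,i) = (A ^\<^sub>m k) $$ (i,j)"
  using symmetric_mat_index[OF pow_carrier_mat[OF A_carrier]] transpose_pow_mat[OF A_carrier]
  by (simp add: A_symmetric)

lemma A_nonzero_iff: "i < n \<Longrightarrow> j < n \<Longrightarrow> i \<noteq> j \<Longrightarrow> A $$ (i,j) \<noteq> 0 \<longleftrightarrow> cycle_edge n i j"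
  using A_in_S unfolding S_graph_def by auto

lemma shift_less: "shift i t < n"
  using three_le_n by (simp add: cycle_shift_less)

definition weight :: "nat \<Rightarrow> real" where
  "weight i = A $$ (i, shift i 1)"

lemma cycle_edge_shift_1: "i < n \<Longrightarrow> cycle_edge n i (shift i 1)"
  unfolding cycle_edge_def using three_le_n shift_less by (auto simp: cycle_shift_def mod_if)

lemma weight_nonzero: "i < n \<Longrightarrow> weight i \<noteq> 0"
  unfolding weight_def using A_nonzero_iff[OF _ shift_less] cycle_edge_shift_1
  by (auto simp: cycle_edge_def)

lemma A_shift_1_back: "i < n \<Longrightarrow> A $$ (shift i 1, i) = weight i"
  unfolding weight_def using A_index_sym shift_less by auto

lemma A_nonzero_imp_adjacent:
  assumes "l < n" "j < n" "A $$ (l,j) \<noteq> 0"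
  shows "j = l \<or> j = shift l 1 \<or> l = shift j 1"
  using assms A_nonzero_iff[of l j] unfolding cycle_edge_def cycle_shift_def by auto

lemma cycle_dist_le_Suc_if_A_nonzero:
  assumes "i < n" "l < n" "j < n" "A $$ (l,j) \<noteq> 0"
  shows "cdist i j \<le> Suc (cdist i l)"
  using A_nonzero_imp_adjacent[OF assms(2-4)] assms(1-3)
    cycle_dist_shift_1_le[of i n l] cycle_dist_le_shift_1[of i n j] by auto

lemma cycle_dist_le_1_if_A_nonzero:
  "l < n \<Longrightarrow> j < n \<Longrightarrow> A $$ (l,j) \<noteq> 0 \<Longrightarrow> cdist l j \<le> 1"
  using cycle_dist_le_Suc_if_A_nonzero[of l l j] by simp

lemma A_nonzero_if_cycle_dist_1:
  assumes i: "i < n" and j: "j < n" and "cdist i j = 1"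
  shows "A $$ (i,j) \<noteq> 0"
proof -
  obtain t where t: "t < n" "j = shift i t" using ex_cycle_shift_eq[OF i j] .
  then have "min t (n - t) = 1" using \<open>cdist i j = 1\<close> cycle_dist_shift[OF i] by simp
  then consider "t = 1" | "t = n - 1" by linarith
  then show ?thesis
  proof cases
    case 1
    then show ?thesis using weight_nonzero[OF i] t unfolding weight_def by simp
  next
    case 2
    then have "shift j 1 = i"
      using three_le_n t by (simp add: cycle_shift_shift cycle_shift_self[OF i])
    then show ?thesis using A_shift_1_back[OF j] weight_nonzero[OF j] by simp
  qed
qed

lemma pow_entry_eq_0_if_less_cycle_dist:
  "i < n \<Longrightarrow> j < n \<Longrightarrow> k < cdist i j \<Longrightarrow> (A ^\<^sub>m k) $$ (i,j) = 0"
proof (induct k arbitrary: j)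
  case 0
  then show ?case using A_carrier by (auto simp: cycle_dist_eq_0_iff)
next
  case (Suc k)
  have "(A ^\<^sub>m Suc k) $$ (i,j) = (\<Sum>l<n. (A ^\<^sub>m k) $$ (i,l) * A $$ (l,j))"
    using A_carrier Suc(2,3) by (simp add: index_mult_mat_sum[of _ n n _ n] del: index_mult_mat)
  also have "\<dots> = 0"
  proof (intro sum.neutral ballI)
    fix l assume l: "l \<in> {..<n}"
    show "(A ^\<^sub>m k) $$ (i,l) * A $$ (l,j) = 0"
    proof (cases "A $$ (l,j) = 0")
      case False
      then have "k < cdist i l"
        using cycle_dist_le_Suc_if_A_nonzero[of i l j] Suc(2-4) l by auto
      then show ?thesis using Suc(1,2) l by simp
    qed simp
  qed
  finally show ?case .
qed

definition path_weight :: "nat \<Rightarrow> nat \<Rightarrow> real" where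
  "path_weight k i = (\<Prod>t<k. weight (shift i t))"

lemma path_weight_Suc: "path_weight (Suc k) i = path_weight k i * weight (shift i k)"
  unfolding path_weight_def by simp

lemma path_weight_Suc_shift: "i < n \<Longrightarrow> path_weight (Suc k) i = weight i * path_weight k (shift i 1)"
  unfolding path_weight_def prod.lessThan_Suc_shift cycle_shift_shift by (simp add: cycle_shift_0)

lemma path_weight_nonzero: "i < n \<Longrightarrow> path_weight k i \<noteq> 0"
  unfolding path_weight_def using weight_nonzero shift_less by auto

text \<open>For antipodal vertices (2 k = n) both arcs of the cycle are shortest paths.\<close>

lemma pow_entry_along_path:
  "2 * k \<le> n \<Longrightarrow> i < n \<Longrightarrow>
    (A ^\<^sub>m k) $$ (i, shift i k) = path_weight k i + (if 2 * k = n then path_weight k (shift i k) else 0)"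
proof (induct k arbitrary: i)
  case 0
  then show ?case using A_carrier three_le_n by (simp add: cycle_shift_0 path_weight_def)
next
  case (Suc k i)
  note i = Suc(3)
  let ?j = "shift i (Suc k)"
  let ?f = "\<lambda>t. (A ^\<^sub>m k) $$ (i, shift i t) * A $$ (shift i t, ?j)"
  have "(A ^\<^sub>m Suc k) $$ (i, ?j) = (\<Sum>l<n. (A ^\<^sub>m k) $$ (i,l) * A $$ (l, ?j))"
    using A_carrier i shift_less by (simp add: index_mult_mat_sum[of _ n n _ n] del: index_mult_mat)
  also have "\<dots> = (\<Sum>t<n. ?f t)" by (rule sum_cycle_shift[OF i])
  finally have sum: "(A ^\<^sub>m Suc k) $$ (i, ?j) = (\<Sum>t<n. ?f t)" .
  have support: "t = k \<or> (2 * Suc k = n \<and> t = Suc (Suc k))" if t: "t < n" and nz: "?f t \<noteq> 0" for t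
  proof (rule offset_near_path_end[OF t Suc(2)])
    have "cdist i (shift i t) \<le> k"
      using nz pow_entry_eq_0_if_less_cycle_dist[OF i shift_less[of i t], of k] by fastforce
    then show "min t (n - t) \<le> k" by (simp only: cycle_dist_shift[OF i t])
    show "cdist t (Suc k) \<le> 1"
      using nz cycle_dist_le_1_if_A_nonzero[OF shift_less shift_less, of i t i "Suc k"]
      by (auto simp: cycle_dist_shift_shift)
  qed
  have f_k: "?f k = path_weight (Suc k) i" if "2 * k \<noteq> n"
    using Suc(1)[OF _ i] Suc(2) that
    by (simp add: weight_def cycle_shift_shift path_weight_Suc del: pow_mat.simps)
  show ?case
  proof (cases "2 * Suc k = n")
    case False
    have "(\<Sum>t<n. ?f t) = ?f k"
      using Suc(2) False support by (intro sum_eq_single_term) auto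
    moreover have "2 * k \<noteq> n" using Suc(2) by simp
    ultimately show ?thesis using sum f_k False by simp
  next
    case True
    let ?l = "shift i (Suc (Suc k))"
    have "k \<ge> 1" using True three_le_n by simp
    then have "(\<Sum>t<n. ?f t) = ?f k + ?f (Suc (Suc k))"
      using True support by (intro sum_eq_two_terms) auto
    moreover have "?f k = path_weight (Suc k) i" using f_k True by simp
    moreover have "?f (Suc (Suc k)) = path_weight (Suc k) ?j"
    proof -
      have "Suc (Suc k) + k = n" using True by simp
      then have "shift ?l k = i" by (simp add: cycle_shift_shift cycle_shift_self[OF i])
      have "(A ^\<^sub>m k) $$ (i, ?l) = (A ^\<^sub>m k) $$ (?l, shift ?l k)"
        using pow_index_sym[OF i shift_less] \<open>shift ?l k = i\<close> by simp
      also have "\<dots> = path_weight k ?l"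
        using Suc(1)[OF _ shift_less] True by simp
      finally have "(A ^\<^sub>m k) $$ (i, ?l) = path_weight k ?l" .
      moreover have "?l = shift ?j 1" by (simp add: cycle_shift_shift)
      ultimately show ?thesis
        using A_shift_1_back[OF shift_less] path_weight_Suc_shift[OF shift_less] by simp
    qed
    ultimately show ?thesis using sum True by simp
  qed
qed

end

locale cycle_smp_witness = cycle_matrix +
  fixes X :: "real mat"
  assumes X_carrier: "X \<in> carrier_mat n n"
    and X_symmetric: "transpose_mat X = X"
    and A_X_orthogonal: "\<And>i j. i < n \<Longrightarrow> j < n \<Longrightarrow> A $$ (i,j) * X $$ (i,j) = 0"
    and X_diag_0: "\<And>i. i < n \<Longrightarrow> X $$ (i,i) = 0"
    and A_X_commute: "A * X = X * A"
    and trace_pow_mult_0: "\<And>k. (\<Sum>i<n. (A ^\<^sub>m k * X) $$ (i,i)) = 0"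
begin

lemma X_index_sym: "i < n \<Longrightarrow> j < n \<Longrightarrow> X $$ (j,i) = X $$ (i,j)"
  by (rule symmetric_mat_index[OF X_carrier X_symmetric])

lemma X_eq_0_if_cycle_dist_le_1:
  assumes a: "a < n" and b: "b < n" and "cdist a b \<le> 1"
  shows "X $$ (a,b) = 0"
proof (cases "cdist a b = 0")
  case True
  then show ?thesis using a b X_diag_0 by (simp add: cycle_dist_eq_0_iff)
next
  case False
  then have "A $$ (a,b) \<noteq> 0" using A_nonzero_if_cycle_dist_1[OF a b] \<open>cdist a b \<le> 1\<close> by simp
  then show ?thesis using A_X_orthogonal[OF a b] by simp
qed

definition band_entry :: "nat \<Rightarrow> nat \<Rightarrow> real" where
  "band_entry d i = X $$ (i, shift i d)"

definition weighted_band_entry :: "nat \<Rightarrow> nat \<Rightarrow> real" where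
  "weighted_band_entry d i = path_weight d i * band_entry d i"

context
  fixes d :: nat
  assumes one_le_d: "1 \<le> d" and d_bound: "2 * Suc d \<le> n"
    and X_band_0: "\<And>a b. a < n \<Longrightarrow> b < n \<Longrightarrow> cdist a b \<le> d \<Longrightarrow> X $$ (a,b) = 0"
begin

lemma band_entry_commute_relation:
  assumes i: "i < n"
  shows "weight i * band_entry (Suc d) i = band_entry (Suc d) (shift i 1) * weight (shift i (Suc d))"
proof -
  let ?i' = "shift i 1" and ?j' = "shift i (Suc d)"
  have "(A * X) $$ (?i', ?j') = (\<Sum>t<n. A $$ (?i', shift i t) * X $$ (shift i t, ?j'))"
    using A_carrier X_carrier shift_less sum_cycle_shift[OF i]
    by (simp add: index_mult_mat_sum[of _ n n _ n] del: index_mult_mat)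
  also have "\<dots> = A $$ (?i', shift i 0) * X $$ (shift i 0, ?j')"
  proof (rule sum_eq_single_term)
    fix t assume t: "t \<in> {..<n}" "t \<noteq> 0"
    show "A $$ (?i', shift i t) * X $$ (shift i t, ?j') = 0"
    proof (cases "A $$ (?i', shift i t) = 0")
      case False
      then have "cdist 1 t \<le> 1"
        using cycle_dist_le_1_if_A_nonzero[OF shift_less shift_less, of i 1 i t]
        by (simp add: cycle_dist_shift_shift)
      then have "cdist t (Suc d) \<le> d"
        using t one_le_d d_bound by (intro cycle_dist_to_Suc_of_neighbour_of_1) auto
      then show ?thesis using X_band_0[OF shift_less shift_less] by (simp add: cycle_dist_shift_shift)
    qed simp
  qed (use three_le_n in auto)
  also have "\<dots> = weight i * band_entry (Suc d) i"
    using A_shift_1_back[OF i] by (simp add: cycle_shift_0[OF i] band_entry_def)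
  finally have AX: "(A * X) $$ (?i', ?j') = weight i * band_entry (Suc d) i" .
  have "(X * A) $$ (?i', ?j') = (\<Sum>t<n. X $$ (?i', shift i t) * A $$ (shift i t, ?j'))"
    using A_carrier X_carrier shift_less sum_cycle_shift[OF i]
    by (simp add: index_mult_mat_sum[of _ n n _ n] del: index_mult_mat)
  also have "\<dots> = X $$ (?i', shift i (Suc (Suc d))) * A $$ (shift i (Suc (Suc d)), ?j')"
  proof (rule sum_eq_single_term)
    fix t assume t: "t \<in> {..<n}" "t \<noteq> Suc (Suc d)"
    show "X $$ (?i', shift i t) * A $$ (shift i t, ?j') = 0"
    proof (cases "A $$ (shift i t, ?j') = 0")
      case False
      then have "cdist t (Suc d) \<le> 1"
        using cycle_dist_le_1_if_A_nonzero[OF shift_less shift_less, of i t i "Suc d"]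
        by (simp add: cycle_dist_shift_shift)
      then have "cdist 1 t \<le> d"
        using t one_le_d d_bound by (intro cycle_dist_to_1_of_neighbour_of_Suc) auto
      then show ?thesis using X_band_0[OF shift_less shift_less] by (simp add: cycle_dist_shift_shift)
    qed simp
  qed (use d_bound one_le_d in auto)
  also have "\<dots> = band_entry (Suc d) ?i' * weight ?j'"
  proof -
    have "shift i (Suc (Suc d)) = shift ?i' (Suc d)" "shift i (Suc (Suc d)) = shift ?j' 1"
      unfolding cycle_shift_shift by simp_all
    then have "X $$ (?i', shift i (Suc (Suc d))) = band_entry (Suc d) ?i'"
      and "A $$ (shift i (Suc (Suc d)), ?j') = weight ?j'"
      unfolding band_entry_def using A_shift_1_back[OF shift_less[of i "Suc d"]] by simp_all
    then show ?thesis by simp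
  qed
  finally show ?thesis using AX A_X_commute by simp
qed

lemma weighted_band_entry_shift_1:
  assumes i: "i < n"
  shows "weighted_band_entry (Suc d) (shift i 1) = weighted_band_entry (Suc d) i"
proof -
  have paths: "weight i * path_weight (Suc d) (shift i 1) = path_weight (Suc d) i * weight (shift i (Suc d))"
    using path_weight_Suc[of "Suc d" i] path_weight_Suc_shift[OF i, of "Suc d"] by simp
  have "weight i * weighted_band_entry (Suc d) (shift i 1)
      = (weight i * path_weight (Suc d) (shift i 1)) * band_entry (Suc d) (shift i 1)"
    by (simp add: weighted_band_entry_def)
  also have "\<dots> = path_weight (Suc d) i * (band_entry (Suc d) (shift i 1) * weight (shift i (Suc d)))"
    unfolding paths by simp
  also have "\<dots> = weight i * weighted_band_entry (Suc d) i"
    unfolding band_entry_commute_relation[OF i, symmetric] by (simp add: weighted_band_entry_def)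
  finally show ?thesis using weight_nonzero[OF i] by simp
qed

lemma weighted_band_entry_const: "i < n \<Longrightarrow> weighted_band_entry (Suc d) i = weighted_band_entry (Suc d) 0"
proof (induct i)
  case (Suc i)
  then have "shift i 1 = Suc i" by (simp add: cycle_shift_def)
  then show ?case using weighted_band_entry_shift_1[of i] Suc by simp
qed simp

lemma diag_pow_mult:
  assumes i: "i < n"
  shows "(A ^\<^sub>m Suc d * X) $$ (i,i)
    = weighted_band_entry (Suc d) i + weighted_band_entry (Suc d) (shift i (n - Suc d))"
proof -
  txt \<open>Only the offsets t = d + 1 and t = n - (d + 1) contribute: beyond distance d + 1 the
    power of A vanishes, and within distance d the matrix X does.\<close>
  let ?g = "\<lambda>t. (A ^\<^sub>m Suc d) $$ (i, shift i t) * X $$ (shift i t, i)"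
  have sum: "(A ^\<^sub>m Suc d * X) $$ (i,i) = (\<Sum>t<n. ?g t)"
    using A_carrier X_carrier i sum_cycle_shift[OF i]
    by (simp add: index_mult_mat_sum[of _ n n _ n] del: index_mult_mat pow_mat.simps)
  have support: "?g t = 0" if t: "t < n" "t \<noteq> Suc d" "t \<noteq> n - Suc d" for t
  proof (cases "min t (n - t) \<le> Suc d")
    case False
    then have "Suc d < cdist i (shift i t)" unfolding cycle_dist_shift[OF i t(1)] by linarith
    then have "(A ^\<^sub>m Suc d) $$ (i, shift i t) = 0"
      by (rule pow_entry_eq_0_if_less_cycle_dist[OF i shift_less])
    then show ?thesis by (simp del: pow_mat.simps)
  next
    case True
    then have "cdist (shift i t) i \<le> d"
      using t cycle_dist_shift[OF i t(1)] cycle_dist_commute by auto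
    then show ?thesis using X_band_0[OF shift_less i] by simp
  qed
  have band_i: "X $$ (shift i (Suc d), i) = band_entry (Suc d) i"
    using X_index_sym[OF i shift_less] by (simp add: band_entry_def)
  show ?thesis
  proof (cases "2 * Suc d = n")
    case True
    let ?j = "shift i (Suc d)"
    have "Suc d + Suc d = n" using True by simp
    then have "shift ?j (Suc d) = i" unfolding cycle_shift_shift using cycle_shift_self[OF i] by simp
    then have "band_entry (Suc d) ?j = band_entry (Suc d) i"
      using X_index_sym[OF i shift_less] by (simp add: band_entry_def)
    moreover have "(\<Sum>t<n. ?g t) = ?g (Suc d)"
      using support True d_bound by (intro sum_eq_single_term) auto
    moreover have "n - Suc d = Suc d" using True by simp
    ultimately show ?thesis
      using sum True pow_entry_along_path[OF d_bound i] band_i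
      by (simp add: weighted_band_entry_def algebra_simps del: pow_mat.simps)
  next
    case False
    let ?m = "shift i (n - Suc d)"
    have "(\<Sum>t<n. ?g t) = ?g (Suc d) + ?g (n - Suc d)"
      using support False d_bound one_le_d by (intro sum_eq_two_terms) auto
    moreover have "?g (Suc d) = weighted_band_entry (Suc d) i"
      using pow_entry_along_path[OF d_bound i] False band_i
      by (simp add: weighted_band_entry_def del: pow_mat.simps)
    moreover have "?g (n - Suc d) = weighted_band_entry (Suc d) ?m"
    proof -
      have "n - Suc d + Suc d = n" using d_bound by simp
      then have m_i: "shift ?m (Suc d) = i" unfolding cycle_shift_shift using cycle_shift_self[OF i] by simp
      have "(A ^\<^sub>m Suc d) $$ (?m, shift ?m (Suc d)) = path_weight (Suc d) ?m"
        using pow_entry_along_path[OF d_bound shift_less[of i "n - Suc d"]] False by simp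
      then have "(A ^\<^sub>m Suc d) $$ (i, ?m) = path_weight (Suc d) ?m"
        unfolding m_i using pow_index_sym[OF i shift_less] by (simp del: pow_mat.simps)
      moreover have "X $$ (?m, i) = band_entry (Suc d) ?m"
        unfolding band_entry_def m_i ..
      ultimately show ?thesis by (simp add: weighted_band_entry_def del: pow_mat.simps)
    qed
    ultimately show ?thesis using sum by simp
  qed
qed

lemma band_entry_0:
  assumes i: "i < n"
  shows "band_entry (Suc d) i = 0"
proof -
  have "0 = (\<Sum>i<n. (A ^\<^sub>m Suc d * X) $$ (i,i))" by (rule trace_pow_mult_0[symmetric])
  also have "\<dots> = (\<Sum>i<n. 2 * weighted_band_entry (Suc d) 0)"
  proof (rule sum.cong[OF refl])
    fix j assume "j \<in> {..<n}"
    then show "(A ^\<^sub>m Suc d * X) $$ (j,j) = 2 * weighted_band_entry (Suc d) 0"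
      using diag_pow_mult weighted_band_entry_const[of j] weighted_band_entry_const[OF shift_less]
      by (simp del: pow_mat.simps)
  qed
  finally have "weighted_band_entry (Suc d) 0 = 0" using three_le_n by simp
  then have "weighted_band_entry (Suc d) i = 0" using weighted_band_entry_const[OF i] by simp
  then show ?thesis using path_weight_nonzero[OF i] by (simp add: weighted_band_entry_def)
qed

lemma X_eq_0_if_cycle_dist_le_Suc:
  assumes a: "a < n" and b: "b < n" and dist: "cdist a b \<le> Suc d"
  shows "X $$ (a,b) = 0"
proof (cases "cdist a b \<le> d")
  case False
  obtain t where t: "t < n" "b = shift a t" using ex_cycle_shift_eq[OF a b] .
  then have "min t (n - t) = Suc d" using dist False cycle_dist_shift[OF a t(1)] by simp
  then consider "t = Suc d" | "t = n - Suc d" using t(1) by linarith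
  then show ?thesis
  proof cases
    case 1
    then show ?thesis using band_entry_0[OF a] t by (simp add: band_entry_def)
  next
    case 2
    have "n - Suc d + Suc d = n" using d_bound by simp
    then have "shift b (Suc d) = a" unfolding t(2) 2 cycle_shift_shift using cycle_shift_self[OF a] by simp
    then show ?thesis using band_entry_0[OF b] X_index_sym[OF a b] by (simp add: band_entry_def)
  qed
qed (use X_band_0 a b in simp)

end

lemma X_eq_0_if_cycle_dist_le:
  "1 \<le> d \<Longrightarrow> 2 * d \<le> n \<Longrightarrow> a < n \<Longrightarrow> b < n \<Longrightarrow> cdist a b \<le> d \<Longrightarrow> X $$ (a,b) = 0"
proof (induct d arbitrary: a b)
  case (Suc d)
  show ?case
  proof (cases "d = 0")
    case True
    then show ?thesis using X_eq_0_if_cycle_dist_le_1 Suc(4-6) by simp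
  next
    case False
    show ?thesis
    proof (rule X_eq_0_if_cycle_dist_le_Suc[OF _ _ _ Suc(4-6)])
      show "1 \<le> d" "2 * Suc d \<le> n" using False Suc(3) by simp_all
      show "X $$ (a',b') = 0" if "a' < n" "b' < n" "cdist a' b' \<le> d" for a' b'
        by (rule Suc(1)[OF _ _ that]) (use False Suc(3) in simp_all)
    qed
  qed
qed simp

theorem X_eq_0: "X = 0\<^sub>m n n"
proof (rule eq_matI)
  fix a b assume "a < dim_row (0\<^sub>m n n)" "b < dim_col (0\<^sub>m n n)"
  then have "a < n" "b < n" by auto
  moreover have "1 \<le> n div 2" "2 * (n div 2) \<le> n" using three_le_n by auto
  ultimately show "X $$ (a,b) = 0\<^sub>m n n $$ (a,b)"
    using X_eq_0_if_cycle_dist_le[OF _ _ _ _ cycle_dist_le_half] by simp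
qed (use X_carrier in auto)

end

theorem (in cycle_matrix) has_SMP: "SMP A"
  unfolding SMP_def Let_def
proof (intro ballI impI, elim conjE)
  fix X :: "real mat"
  assume X: "X \<in> carrier_mat (dim_row A) (dim_row A)" and sym: "transpose_mat X = X"
    and orth: "\<forall>i<dim_row A. \<forall>j<dim_row A. A $$ (i,j) * X $$ (i,j) = 0"
    and diag: "\<forall>i<dim_row A. X $$ (i,i) = 0"
    and comm: "A * X - X * A = 0\<^sub>m (dim_row A) (dim_row A)"
    and low: "\<forall>k<length (distinct_eigenvalues A). (\<Sum>i<dim_row A. (A ^\<^sub>m k * X) $$ (i,i)) = 0"
  have dim: "dim_row A = n" using A_carrier by simp
  have "A * X = X * A"
  proof (rule eq_matI)
    fix i j assume "i < dim_row (X * A)" "j < dim_col (X * A)"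
    then have "(A * X - X * A) $$ (i,j) = 0" using comm X dim A_carrier by simp
    then show "(A * X) $$ (i,j) = (X * A) $$ (i,j)" using \<open>i < _\<close> \<open>j < _\<close> X A_carrier dim by simp
  qed (use X A_carrier dim in auto)
  moreover have "(\<Sum>i<n. (A ^\<^sub>m k * X) $$ (i,i)) = 0" for k
    using real_symmetric_trace_pow_mult_eq_0[OF A_carrier A_symmetric] X low dim by simp
  ultimately interpret cycle_smp_witness n A X
    using X sym orth diag dim by unfold_locales auto
  show "X = 0\<^sub>m (dim_row A) (dim_row A)" using X_eq_0 dim by simp
qed

theorem theorem4p2:
  fixes n :: nat and A :: "real mat"
  assumes "n \<ge> 3" and "A \<in> S_graph n (cycle_edge n)"
  shows "\<exists>B \<in> S_graph n (cycle_edge n). mult_list B = mult_list A \<and> SMP B"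
proof -
  interpret cycle_matrix n A using assms by unfold_locales
  show ?thesis using has_SMP assms(2) by blast
qed

end
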